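(* Let $k\ge3$. There exist $n_0(k)$ and $C_k$ such that for all $n\ge n_0(k)$ and all $\gamma$ with $|\gamma-\frac12|\le n^{-1/3}$, there exists a unique $\lambda=\lambda(\gamma)\in\mathbb R$ with $\sum_{j=1}^{k-1}j\,\nu_{\gamma,\lambda}(j)=k\gamma$. Furthermore $\lambda(1/2)=0$ and $|\lambda(\gamma)|\le C_k n^{-1/3}$ for all such $\gamma$.
   Context: For $\gamma\in(0,1)$ let $p_\gamma(j)=\binom kj\gamma^j(1-\gamma)^{k-j}$, and for $\lambda\in\mathbb R$ define the probability measure $\nu_{\gamma,\lambda}$ on $\{1,\dots,k-1\}$ by $\nu_{\gamma,\lambda}(j)=p_\gamma(j)e^{\lambda j}/\sum_{i=1}^{k-1}p_\gamma(i)e^{\lambda i}$. *)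

theory Defs
  imports Complex_Main
begin

definition p_bin :: "nat \<Rightarrow> real \<Rightarrow> nat \<Rightarrow> real" where
  "p_bin k \<gamma> j = real (k choose j) * \<gamma> ^ j * (1 - \<gamma>) ^ (k - j)"

definition nu :: "nat \<Rightarrow> real \<Rightarrow> real \<Rightarrow> nat \<Rightarrow> real" where
  "nu k \<gamma> l j = p_bin k \<gamma> j * exp (l * real j) /
      (\<Sum>i=1..k-1. p_bin k \<gamma> i * exp (l * real i))"

end

theory Submission
  imports Defs
begin

text \<open>After multiplication by the positive factor \<open>exp(-\<lambda>k\<gamma>) \<Sum>\<^sub>i p\<^sub>\<gamma>(i) exp(\<lambda>i)\<close>,
  the equation \<open>\<Sum>\<^sub>j j \<nu>(j) = k\<gamma>\<close> reads \<open>D(\<lambda>) = 0\<close> for the strictly increasing function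
  \<open>D = drift k \<gamma>\<close>, \<open>D(\<lambda>) = \<Sum>\<^sub>j p\<^sub>\<gamma>(j) (j - k\<gamma>) exp(\<lambda>(j - k\<gamma>))\<close>. By the binomial mean identity,
  \<open>D(0) = k\<gamma>(1 - \<gamma>)((1 - \<gamma>)^(k-1) - \<gamma>^(k-1))\<close> is \<open>O(|\<gamma> - 1/2|)\<close>, whereas on \<open>[0, t]\<close> the
  function grows by at least \<open>t exp(-tk) \<Sum>\<^sub>j p\<^sub>\<gamma>(j) (j - k\<gamma>)\<^sup>2\<close>, a quantity bounded below
  for \<open>\<gamma>\<close> near 1/2. Hence \<open>D(C\<epsilon>) \<ge> 0\<close> whenever \<open>|\<gamma> - 1/2| \<le> \<epsilon>\<close>. The reflection
  \<open>j \<mapsto> k - j\<close> gives \<open>D\<^sub>1\<^sub>-\<^sub>\<gamma>(\<lambda>) = -D\<^sub>\<gamma>(-\<lambda>)\<close>, so also \<open>D(-C\<epsilon>) \<le> 0\<close> and the unique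
  root lies in \<open>[-C\<epsilon>, C\<epsilon>]\<close>; at \<open>\<gamma> = 1/2\<close> the same symmetry forces \<open>D(0) = 0\<close>.\<close>

lemma abs_power_diff_le:
  fixes x y :: real
  assumes "0 \<le> x" "x \<le> 1" "0 \<le> y" "y \<le> 1"
  shows "\<bar>x ^ n - y ^ n\<bar> \<le> real n * \<bar>x - y\<bar>"
proof (induction n)
  case 0
  then show ?case by simp
next
  case (Suc n)
  have split: "x ^ Suc n - y ^ Suc n = x * (x ^ n - y ^ n) + y ^ n * (x - y)"
    by (simp add: algebra_simps)
  have "\<bar>x * (x ^ n - y ^ n)\<bar> \<le> \<bar>x ^ n - y ^ n\<bar>"
    using assms by (simp add: abs_mult mult_left_le_one_le)
  moreover have "\<bar>y ^ n * (x - y)\<bar> \<le> \<bar>x - y\<bar>"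
    using assms by (simp add: abs_mult mult_left_le_one_le power_le_one)
  ultimately show ?case
    using Suc split by (simp add: algebra_simps)
qed

lemma p_bin_nonneg: "0 \<le> g \<Longrightarrow> g \<le> 1 \<Longrightarrow> 0 \<le> p_bin k g j"
  by (simp add: p_bin_def)

lemma p_bin_pos: "0 < g \<Longrightarrow> g < 1 \<Longrightarrow> j \<le> k \<Longrightarrow> 0 < p_bin k g j"
  by (simp add: p_bin_def)

lemma p_bin_reflect: "j \<le> k \<Longrightarrow> p_bin k (1 - g) (k - j) = p_bin k g j"
  by (simp add: p_bin_def binomial_symmetric[of j k])

lemma sum_p_bin: "(\<Sum>j\<le>k. p_bin k g j) = 1"
  using binomial_ring[of g "1 - g" k] by (simp add: p_bin_def)

lemma sum_mult_p_bin: "(\<Sum>j\<le>k. real j * p_bin k g j) = real k * g"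
proof (cases k)
  case 0
  then show ?thesis by simp
next
  case (Suc m)
  have "(\<Sum>j\<le>Suc m. real j * p_bin (Suc m) g j)
      = (\<Sum>i\<le>m. real (Suc i) * p_bin (Suc m) g (Suc i))"
    by (subst sum.atMost_Suc_shift) simp
  also have "\<dots> = (\<Sum>i\<le>m. real (Suc m) * g * (real (m choose i) * g ^ i * (1 - g) ^ (m - i)))"
  proof (rule sum.cong)
    fix i
    have "real (Suc i) * real (Suc m choose Suc i) = real (Suc m) * real (m choose i)"
      by (metis Suc_times_binomial of_nat_mult)
    then show "real (Suc i) * p_bin (Suc m) g (Suc i)
        = real (Suc m) * g * (real (m choose i) * g ^ i * (1 - g) ^ (m - i))"
      unfolding p_bin_def by (simp add: mult_ac)
  qed simp
  also have "\<dots> = real (Suc m) * g * (g + (1 - g)) ^ m"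
    unfolding binomial_ring[of g "1 - g" m] by (simp add: sum_distrib_left)
  finally show ?thesis
    using Suc by simp
qed

definition drift :: "nat \<Rightarrow> real \<Rightarrow> real \<Rightarrow> real" where
  "drift k g l = (\<Sum>j=1..k-1. p_bin k g j * ((real j - real k * g) * exp (l * (real j - real k * g))))"

lemma sum_nu_eq_iff_drift_eq_0:
  assumes "0 < g" "g < 1" "k \<ge> 2"
  shows "(\<Sum>j=1..k-1. real j * nu k g l j) = real k * g \<longleftrightarrow> drift k g l = 0"
proof -
  define Z where "Z = (\<Sum>i=1..k-1. p_bin k g i * exp (l * real i))"
  have "Z > 0"
    unfolding Z_def by (rule sum_pos) (use assms in \<open>auto intro!: mult_pos_pos p_bin_pos\<close>)
  have "(\<Sum>j=1..k-1. real j * nu k g l j) = (\<Sum>j=1..k-1. real j * p_bin k g j * exp (l * real j)) / Z"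
    unfolding nu_def Z_def[symmetric] by (simp add: sum_divide_distrib mult.assoc)
  then have "(\<Sum>j=1..k-1. real j * nu k g l j) = real k * g \<longleftrightarrow>
      (\<Sum>j=1..k-1. real j * p_bin k g j * exp (l * real j)) - real k * g * Z = 0"
    using \<open>Z > 0\<close> by (simp add: divide_eq_eq)
  also have "(\<Sum>j=1..k-1. real j * p_bin k g j * exp (l * real j)) - real k * g * Z
      = (\<Sum>j=1..k-1. (real j - real k * g) * p_bin k g j * exp (l * real j))"
    unfolding Z_def by (simp add: sum_distrib_left sum_subtractf[symmetric] algebra_simps)
  also have "\<dots> = exp (l * (real k * g)) * drift k g l"
    unfolding drift_def sum_distrib_left
    by (rule sum.cong) (simp_all add: algebra_simps exp_add[symmetric])
  finally show ?thesis
    by simp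
qed

lemma drift_reflect: "drift k (1 - g) l = - drift k g (- l)"
proof -
  have "drift k (1 - g) l
      = (\<Sum>j=1..k-1. (real (k - j) - real k * (1 - g)) * p_bin k (1 - g) (k - j)
                    * exp (l * (real (k - j) - real k * (1 - g))))"
    unfolding drift_def by (subst sum.atLeastAtMost_rev) (rule sum.cong; auto simp: Suc_diff_le)
  also have "\<dots> = (\<Sum>j=1..k-1. - ((real j - real k * g) * p_bin k g j * exp (- l * (real j - real k * g))))"
    by (rule sum.cong) (auto simp: p_bin_reflect of_nat_diff algebra_simps)
  finally show ?thesis
    unfolding drift_def by (simp add: sum_negf mult_ac)
qed

lemma mult_exp_mult_mono:
  fixes d l1 l2 :: real
  assumes "l1 < l2"
  shows "d * exp (l1 * d) \<le> d * exp (l2 * d)"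
    and "d \<noteq> 0 \<Longrightarrow> d * exp (l1 * d) < d * exp (l2 * d)"
proof -
  show less: "d * exp (l1 * d) < d * exp (l2 * d)" if "d \<noteq> 0"
  proof (cases "d > 0")
    case True
    then show ?thesis
      using assms by simp
  next
    case False
    then have "exp (l2 * d) < exp (l1 * d)"
      using assms that by (simp add: mult_strict_right_mono_neg)
    then show ?thesis
      using False that by simp
  qed
  show "d * exp (l1 * d) \<le> d * exp (l2 * d)"
    using less by (cases "d = 0") (auto intro: less_imp_le)
qed

lemma drift_strict_mono:
  assumes "0 < g" "g < 1" "k \<ge> 3"
  shows "strict_mono (drift k g)"
proof (rule strict_monoI)
  fix l1 l2 :: real
  assume "l1 < l2"
  obtain j0 where "j0 \<in> {1..k-1}" "real j0 \<noteq> real k * g"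
  proof (cases "real k * g = 1")
    case True
    then show ?thesis
      using assms by (intro that[of 2]) auto
  next
    case False
    then show ?thesis
      using assms by (intro that[of 1]) auto
  qed
  then show "drift k g l1 < drift k g l2"
    unfolding drift_def using assms
    by (intro sum_strict_mono_ex1 bexI[of _ j0])
      (auto intro!: mult_left_mono mult_strict_left_mono p_bin_pos p_bin_nonneg mult_exp_mult_mono[OF \<open>l1 < l2\<close>])
qed

lemma drift_half_eq_0_iff:
  assumes "k \<ge> 3"
  shows "drift k (1/2) l = 0 \<longleftrightarrow> l = 0"
proof -
  have "drift k (1/2) 0 = 0"
    using drift_reflect[of k "1/2" 0] by simp
  moreover have "drift k (1/2) l = drift k (1/2) 0 \<longleftrightarrow> l = 0"
    using assms by (simp add: strict_mono_eq drift_strict_mono)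
  ultimately show ?thesis
    by simp
qed

lemma drift_0_eq:
  assumes "k \<ge> 1"
  shows "drift k g 0 = real k * g * (1 - g) * ((1 - g) ^ (k - 1) - g ^ (k - 1))"
proof -
  have "(\<Sum>j\<le>k. p_bin k g j * (real j - real k * g))
      = (\<Sum>j\<le>k. real j * p_bin k g j) - real k * g * (\<Sum>j\<le>k. p_bin k g j)"
    by (simp add: sum_subtractf sum_distrib_left algebra_simps)
  then have centred: "(\<Sum>j\<le>k. p_bin k g j * (real j - real k * g)) = 0"
    by (simp add: sum_p_bin sum_mult_p_bin)
  have "{..k} = insert 0 (insert k {1..k-1})"
    using assms by auto
  with centred assms have "drift k g 0 = real k * g * p_bin k g 0 - real k * (1 - g) * p_bin k g k"
    unfolding drift_def by (simp add: algebra_simps)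
  also have "\<dots> = real k * g * (1 - g) * ((1 - g) ^ (k - 1) - g ^ (k - 1))"
    using assms by (cases k) (simp_all add: p_bin_def algebra_simps)
  finally show ?thesis .
qed

lemma abs_drift_0_le:
  assumes "k \<ge> 1" "0 \<le> g" "g \<le> 1"
  shows "\<bar>drift k g 0\<bar> \<le> 2 * real k ^ 2 * \<bar>g - 1/2\<bar>"
proof -
  have "\<bar>real k * g * (1 - g)\<bar> \<le> real k"
    using assms by (simp add: abs_mult mult_le_one mult_left_le_one_le)
  moreover have "\<bar>(1 - g) ^ (k - 1) - g ^ (k - 1)\<bar> \<le> real (k - 1) * \<bar>(1 - g) - g\<bar>"
    using assms by (intro abs_power_diff_le) auto
  moreover have "real (k - 1) * \<bar>(1 - g) - g\<bar> \<le> real k * (2 * \<bar>g - 1/2\<bar>)"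
    by (intro mult_mono) (auto simp: abs_if)
  ultimately have "\<bar>real k * g * (1 - g)\<bar> * \<bar>(1 - g) ^ (k - 1) - g ^ (k - 1)\<bar>
      \<le> real k * (2 * real k * \<bar>g - 1/2\<bar>)"
    by (intro mult_mono) auto
  then show ?thesis
    by (simp only: drift_0_eq[OF assms(1)] abs_mult) (simp add: power2_eq_square mult_ac)
qed

definition sq_dev :: "nat \<Rightarrow> real \<Rightarrow> real" where
  "sq_dev k g = (\<Sum>j=1..k-1. p_bin k g j * (real j - real k * g)\<^sup>2)"

lemma sq_dev_ge:
  assumes "k \<ge> 3" "2/5 \<le> g" "g \<le> 3/5"
  shows "(2/5) ^ k / 25 \<le> sq_dev k g"
proof -
  have kg: "6/5 \<le> real k * g"
    using mult_mono[of 3 "real k" "2/5" g] assms by simp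
  then have "(2/5) * (2/5) ^ (k - 1) \<le> real k * g * (1 - g) ^ (k - 1)"
    using assms by (intro mult_mono power_mono) auto
  then have p1: "(2/5) ^ k \<le> p_bin k g 1"
    using assms by (cases k) (auto simp: p_bin_def)
  have "(1/5) ^ 2 \<le> (real k * g - 1)\<^sup>2"
    using kg by (intro power_mono) auto
  then have "(1/5) ^ 2 \<le> (real 1 - real k * g)\<^sup>2"
    by (simp add: power2_commute)
  with p1 have "(2/5) ^ k * (1/5) ^ 2 \<le> p_bin k g 1 * (real 1 - real k * g)\<^sup>2"
    using assms by (intro mult_mono p_bin_nonneg) auto
  then have "(2/5) ^ k / 25 \<le> p_bin k g 1 * (real 1 - real k * g)\<^sup>2"
    by (simp add: power2_eq_square)
  also have "\<dots> \<le> sq_dev k g"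
    unfolding sq_dev_def using assms
    by (intro member_le_sum) (auto intro!: mult_nonneg_nonneg p_bin_nonneg)
  finally show ?thesis .
qed

lemma mult_exp_minus_one_ge:
  fixes t d :: real
  assumes "t \<ge> 0"
  shows "t * d\<^sup>2 * exp (- t * \<bar>d\<bar>) \<le> d * (exp (t * d) - 1)"
proof (cases "d \<ge> 0")
  case True
  have "t * d * exp (- t * \<bar>d\<bar>) \<le> t * d"
    using assms True by (intro mult_left_le) auto
  also have "\<dots> \<le> exp (t * d) - 1"
    using exp_ge_add_one_self[of "t * d"] by linarith
  finally show ?thesis
    using True mult_left_mono by (fastforce simp: power2_eq_square mult_ac)
next
  case False
  define x where "x = t * \<bar>d\<bar>"
  have "x \<le> exp x - 1"
    using exp_ge_add_one_self[of x] by linarith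
  then have "x * exp (- x) \<le> (exp x - 1) * exp (- x)"
    by (intro mult_right_mono) auto
  then have "x * exp (- x) \<le> 1 - exp (- x)"
    by (simp add: algebra_simps exp_minus_inverse)
  then have "\<bar>d\<bar> * (x * exp (- x)) \<le> \<bar>d\<bar> * (1 - exp (- x))"
    by (simp add: mult_left_mono)
  then show ?thesis
    using False by (simp add: x_def power2_eq_square algebra_simps)
qed

lemma drift_increment_ge:
  assumes "t \<ge> 0" "0 \<le> g" "g \<le> 1"
  shows "drift k g 0 + t * exp (- t * real k) * sq_dev k g \<le> drift k g t"
proof -
  have "t * exp (- t * real k) * sq_dev k g
      = (\<Sum>j=1..k-1. p_bin k g j * (t * (real j - real k * g)\<^sup>2 * exp (- t * real k)))"
    unfolding sq_dev_def by (simp add: sum_distrib_left algebra_simps)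
  also have "\<dots> \<le> (\<Sum>j=1..k-1. p_bin k g j * ((real j - real k * g) * (exp (t * (real j - real k * g)) - 1)))"
  proof (intro sum_mono mult_left_mono p_bin_nonneg assms)
    fix j assume "j \<in> {1..k-1}"
    then have "real j \<le> real k"
      by auto
    moreover have "0 \<le> real k * g" "real k * g \<le> real k"
      using assms mult_left_le[of g "real k"] by auto
    ultimately have "\<bar>real j - real k * g\<bar> \<le> real k"
      by (simp add: abs_le_iff)
    then have "t * (real j - real k * g)\<^sup>2 * exp (- t * real k)
        \<le> t * (real j - real k * g)\<^sup>2 * exp (- t * \<bar>real j - real k * g\<bar>)"
      using assms by (intro mult_left_mono) (auto intro: mult_left_mono)
    also have "\<dots> \<le> (real j - real k * g) * (exp (t * (real j - real k * g)) - 1)"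
      using assms(1) by (rule mult_exp_minus_one_ge)
    finally show "t * (real j - real k * g)\<^sup>2 * exp (- t * real k)
        \<le> (real j - real k * g) * (exp (t * (real j - real k * g)) - 1)" .
  qed
  also have "\<dots> = drift k g t - drift k g 0"
    unfolding drift_def by (simp add: sum_subtractf[symmetric] algebra_simps)
  finally show ?thesis
    by simp
qed

lemma strict_mono_unique_root:
  fixes f :: "real \<Rightarrow> real"
  assumes "strict_mono f" "continuous_on {a..b} f" "f a \<le> 0" "0 \<le> f b"
  shows "\<exists>!x. f x = 0" and "f x = 0 \<Longrightarrow> x \<in> {a..b}"
proof -
  have "a \<le> b"
  proof (rule ccontr)
    assume "\<not> a \<le> b"
    then have "f b < f a"
      using assms(1) by (simp add: strict_mono_less)
    with assms(3,4) show False
      by simp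
  qed
  then obtain x0 where "f x0 = 0"
    using IVT'[of f a 0 b] assms by auto
  moreover have "inj f"
    using assms(1) by (rule strict_mono_imp_inj_on)
  ultimately show "\<exists>!x. f x = 0"
    by (metis injD)
  show "x \<in> {a..b}" if "f x = 0"
  proof (rule ccontr)
    assume "x \<notin> {a..b}"
    then have "x < a \<or> b < x"
      by auto
    then show False
      using strict_monoD[OF assms(1), of x a] strict_monoD[OF assms(1), of b x] assms(3,4) that
      by auto
  qed
qed

lemma drift_nonneg:
  assumes "k \<ge> 3" "0 \<le> \<epsilon>" "\<epsilon> \<le> 1/10" "\<bar>g - 1/2\<bar> \<le> \<epsilon>" "C * \<epsilon> \<le> 1"
    and C: "50 * real k ^ 2 * exp (real k) \<le> C * (2/5) ^ k"
  shows "0 \<le> drift k g (C * \<epsilon>)"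
proof -
  have "0 < 50 * real k ^ 2 * exp (real k)"
    using assms(1) by simp
  then have "0 < C * (2/5) ^ k"
    using C by linarith
  then have "0 < C"
    by (simp add: zero_less_mult_iff)
  then have "0 \<le> C * \<epsilon>"
    using assms(2) by simp
  have g: "2/5 \<le> g" "g \<le> 3/5"
    using assms by linarith+
  have "2 * real k ^ 2 * \<epsilon> = (50 * real k ^ 2 * exp (real k)) * \<epsilon> * (exp (- real k) / 25)"
    by (simp add: exp_minus field_simps)
  also have "\<dots> \<le> (C * (2/5) ^ k) * \<epsilon> * (exp (- real k) / 25)"
    using C assms(2) by (intro mult_right_mono) auto
  also have "\<dots> = (C * \<epsilon>) * exp (- real k) * ((2/5) ^ k / 25)"
    by simp
  also have "\<dots> \<le> (C * \<epsilon>) * exp (- (C * \<epsilon>) * real k) * sq_dev k g"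
  proof (intro mult_mono mult_left_mono)
    have "(C * \<epsilon>) * real k \<le> real k"
      using \<open>0 \<le> C * \<epsilon>\<close> assms(5) by (simp add: mult_left_le_one_le)
    then show "exp (- real k) \<le> exp (- (C * \<epsilon>) * real k)"
      by simp
  qed (use \<open>0 < C\<close> assms(2) sq_dev_ge[OF assms(1) g] in auto)
  also have "\<dots> \<le> drift k g (C * \<epsilon>) - drift k g 0"
    using drift_increment_ge[OF \<open>0 \<le> C * \<epsilon>\<close>, of g k] g by linarith
  moreover have "2 * real k ^ 2 * \<bar>g - 1/2\<bar> \<le> 2 * real k ^ 2 * \<epsilon>"
    using assms(4) by (intro mult_left_mono) auto
  ultimately show ?thesis
    using abs_drift_0_le[of k g] assms(1) g by linarith
qed

lemma drift_unique_root:
  assumes "k \<ge> 3" "0 \<le> \<epsilon>" "\<epsilon> \<le> 1/10" "\<bar>g - 1/2\<bar> \<le> \<epsilon>" "C * \<epsilon> \<le> 1"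
    and C: "50 * real k ^ 2 * exp (real k) \<le> C * (2/5) ^ k"
  shows "\<exists>!l. drift k g l = 0" and "drift k g l = 0 \<Longrightarrow> \<bar>l\<bar> \<le> C * \<epsilon>"
proof -
  have "0 < g" "g < 1"
    using assms(3,4) by (auto simp: abs_le_iff)
  have reflected: "\<bar>(1 - g) - 1/2\<bar> \<le> \<epsilon>"
    using assms(4) by (simp add: abs_le_iff)
  have neg: "drift k g (- (C * \<epsilon>)) \<le> 0"
    using drift_nonneg[OF assms(1-3) reflected assms(5) C] drift_reflect[of k g "C * \<epsilon>"] by simp
  have pos: "0 \<le> drift k g (C * \<epsilon>)"
    using drift_nonneg[OF assms] .
  have cont: "continuous_on {- (C * \<epsilon>)..C * \<epsilon>} (drift k g)"
    unfolding drift_def by (intro continuous_intros)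
  note root = strict_mono_unique_root[OF drift_strict_mono[OF \<open>0 < g\<close> \<open>g < 1\<close> assms(1)] cont neg pos]
  show "\<exists>!l. drift k g l = 0"
    by (rule root(1))
  show "\<bar>l\<bar> \<le> C * \<epsilon>" if "drift k g l = 0"
    using root(2)[OF that] by auto
qed

theorem lemma2p5:
  fixes k :: nat
  assumes "k \<ge> 3"
  shows "\<exists>n0 :: nat. \<exists>C :: real.
    (\<forall>n \<ge> n0. \<forall>\<gamma> :: real. \<bar>\<gamma> - 1/2\<bar> \<le> real n powr (-1/3) \<longrightarrow>
        (\<exists>!l :: real. (\<Sum>j=1..k-1. real j * nu k \<gamma> l j) = real k * \<gamma>) \<and>
        (\<forall>l :: real. (\<Sum>j=1..k-1. real j * nu k \<gamma> l j) = real k * \<gamma> \<longrightarrow>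
              \<bar>l\<bar> \<le> C * real n powr (-1/3)))
    \<and> (\<forall>l :: real. (\<Sum>j=1..k-1. real j * nu k (1/2) l j) = real k * (1/2) \<longleftrightarrow> l = 0)"
proof -
  define C :: real where "C = 50 * real k ^ 2 * exp (real k) * (5/2) ^ k"
  have C: "50 * real k ^ 2 * exp (real k) \<le> C * (2/5) ^ k"
    by (simp add: C_def power_mult_distrib[symmetric])
  have "0 < C"
    unfolding C_def using assms by simp
  have "(\<lambda>n. real n powr (-1/3)) \<longlonglongrightarrow> 0"
    by (intro tendsto_neg_powr filterlim_real_sequentially) simp
  then have "\<forall>\<^sub>F n in sequentially. real n powr (-1/3) < min (1/10) (1/C)"
    using \<open>0 < C\<close> by (intro order_tendstoD(2)) auto
  then obtain n0 where n0: "\<And>n. n \<ge> n0 \<Longrightarrow> real n powr (-1/3) < min (1/10) (1/C)"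
    unfolding eventually_sequentially by blast
  have "(\<exists>!l. (\<Sum>j=1..k-1. real j * nu k \<gamma> l j) = real k * \<gamma>) \<and>
      (\<forall>l. (\<Sum>j=1..k-1. real j * nu k \<gamma> l j) = real k * \<gamma> \<longrightarrow> \<bar>l\<bar> \<le> C * real n powr (-1/3))"
    if "n \<ge> n0" "\<bar>\<gamma> - 1/2\<bar> \<le> real n powr (-1/3)" for n \<gamma>
  proof -
    have small: "real n powr (-1/3) \<le> 1/10" "C * real n powr (-1/3) \<le> 1"
      using n0[OF that(1)] \<open>0 < C\<close> by (auto simp: field_simps)
    then have "0 < \<gamma>" "\<gamma> < 1"
      using that(2) by (auto simp: abs_le_iff)
    then have "(\<Sum>j=1..k-1. real j * nu k \<gamma> l j) = real k * \<gamma> \<longleftrightarrow> drift k \<gamma> l = 0" for l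
      using assms by (intro sum_nu_eq_iff_drift_eq_0) auto
    then show ?thesis
      using drift_unique_root[OF assms _ small(1) that(2) small(2) C] by simp
  qed
  moreover have "(\<Sum>j=1..k-1. real j * nu k (1/2) l j) = real k * (1/2) \<longleftrightarrow> l = 0" for l
    using assms by (subst sum_nu_eq_iff_drift_eq_0) (auto simp: drift_half_eq_0_iff)
  ultimately show ?thesis
    by blast
qed

end
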